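(* Let $R$ be a commutative unital ring, $G$ a group and $(\mathcal B_1,\Phi_1)\subseteq(\mathcal B_2,\Phi_2)$ a partial subaction of $G$ on generalized Boolean algebras, $\Phi_k=(\{\mathcal I_{k,t}\},\{\phi_{k,t}\})$. Suppose $\mathcal B_1$ is an ideal of $\mathcal B_2$ and $\mathcal I_{1,g}=\mathcal B_1\cap\mathcal I_{2,g}$ for all $g\in G$. Then $\mathrm{Lc}(R,\mathcal B_1)\rtimes_{\Phi_1}G$ is a two-sided ideal of $\mathrm{Lc}(R,\mathcal B_2)\rtimes_{\Phi_2}G$.
   Context: A generalized Boolean algebra is a distributive relatively complemented lattice with least element $0$; an ideal is a subset closed under finite joins and under meets with arbitrary elements. A partial action $\Phi$ of $G$ on $\mathcal B$: ideals $\mathcal I_t$ and isomorphisms $\phi_t:\mathcal I_{t^{-1}}\to\mathcal I_t$ with $\mathcal I_e=\mathcal B$, $\phi_e=\mathrm{id}$, $\phi_s(\mathcal I_{s^{-1}}\cap\mathcal I_t)=\mathcal I_s\cap\mathcal I_{st}$, $\phi_s\phi_t=\phi_{st}$ where defined. A partial subaction: $\mathcal B_1\subseteq\mathcal B_2$ sub generalized Boolean algebra, $\mathcal I_{1,t}\subseteq\mathcal I_{2,t}$, $\phi_{2,t}$ restricting to $\phi_{1,t}$. $\mathrm{Lc}(R,\mathcal B)$ is the algebra of locally constant compactly supported $R$-valued functions on the Stone space of $\mathcal B$, spanned by idempotents $1_U$; $\mathrm{Lc}(R,\mathcal B)\rtimes_\Phi G=\bigoplus_g\mathrm{Lc}(R,\mathcal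 I_g)\delta_g$ with $U\delta_g:=1_U\delta_g$ and $(U\delta_g)(V\delta_h)=\phi_g(\phi_{g^{-1}}(U)\cap V)\delta_{gh}$. The subalgebra $\mathrm{Lc}(R,\mathcal B_1)\rtimes_{\Phi_1}G$ is identified with the $R$-span of $\{U\delta_g:U\in\mathcal I_{1,g}\}$. *)

theory Defs
  imports Main "HOL-Library.Indicator_Function"
begin

text \<open>Generalized Boolean algebras are represented (via Stone duality) as rings of sets:
  families of subsets of a type closed under union, intersection and relative complement,
  containing the empty set. Elements of Lc(R,B) are represented as the R-valued functions
  spanned by indicator functions of members of B.\<close>

definition gba :: "'x set set \<Rightarrow> bool" where
  "gba B \<longleftrightarrow> {} \<in> B \<and> (\<forall>U\<in>B. \<forall>V\<in>B. U \<union> V \<in> B \<and> U \<inter> V \<in> B \<and> U - V \<in> B)"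

definition gba_ideal :: "'x set set \<Rightarrow> 'x set set \<Rightarrow> bool" where
  "gba_ideal B J \<longleftrightarrow> J \<subseteq> B \<and> {} \<in> J \<and> (\<forall>U\<in>J. \<forall>V\<in>J. U \<union> V \<in> J)
      \<and> (\<forall>U\<in>J. \<forall>V\<in>B. U \<inter> V \<in> J)"

text \<open>Partial action of the group (written additively, not necessarily abelian).\<close>
definition partial_action ::
  "'x set set \<Rightarrow> ('g::group_add \<Rightarrow> 'x set set) \<Rightarrow> ('g \<Rightarrow> 'x set \<Rightarrow> 'x set) \<Rightarrow> bool" where
  "partial_action B I \<phi> \<longleftrightarrow>
     gba B
   \<and> (\<forall>t. gba_ideal B (I t))
   \<and> (\<forall>t. bij_betw (\<phi> t) (I (- t)) (I t)
          \<and> \<phi> t {} = {}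
          \<and> (\<forall>U\<in>I (- t). \<forall>V\<in>I (- t).
                \<phi> t (U \<union> V) = \<phi> t U \<union> \<phi> t V \<and> \<phi> t (U \<inter> V) = \<phi> t U \<inter> \<phi> t V))
   \<and> I 0 = B
   \<and> (\<forall>U\<in>B. \<phi> 0 U = U)
   \<and> (\<forall>s t. \<phi> s ` (I (- s) \<inter> I t) = I s \<inter> I (s + t))
   \<and> (\<forall>s t U. U \<in> I (- t) \<longrightarrow> \<phi> t U \<in> I (- s) \<longrightarrow> \<phi> s (\<phi> t U) = \<phi> (s + t) U)"

definition partial_subaction ::
  "'x set set \<Rightarrow> ('g::group_add \<Rightarrow> 'x set set) \<Rightarrow> ('g \<Rightarrow> 'x set \<Rightarrow> 'x set)
   \<Rightarrow> 'x set set \<Rightarrow> ('g \<Rightarrow> 'x set set) \<Rightarrow> ('g \<Rightarrow> 'x set \<Rightarrow> 'x set) \<Rightarrow> bool" where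
  "partial_subaction B1 I1 \<phi>1 B2 I2 \<phi>2 \<longleftrightarrow>
     partial_action B1 I1 \<phi>1 \<and> partial_action B2 I2 \<phi>2
   \<and> B1 \<subseteq> B2
   \<and> (\<forall>t. I1 t \<subseteq> I2 t)
   \<and> (\<forall>t. \<forall>U\<in>I1 (- t). \<phi>1 t U = \<phi>2 t U)"

definition Lc :: "'x set set \<Rightarrow> ('x \<Rightarrow> 'r::comm_ring_1) set" where
  "Lc I = {f. \<exists>S c. finite S \<and> S \<subseteq> I \<and> f = (\<lambda>x. \<Sum>U\<in>S. c U * indicator U x)}"

text \<open>The R-linear map Lc(R,I) -> Lc(R,psi(I)) induced by psi, i.e. 1_U |-> 1_(psi U).\<close>
definition lc_map :: "'x set set \<Rightarrow> ('x set \<Rightarrow> 'x set) \<Rightarrow> ('x \<Rightarrow> 'r) \<Rightarrow> ('x \<Rightarrow> 'r::comm_ring_1)" where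
  "lc_map I \<psi> f = (THE F. \<exists>S c. finite S \<and> S \<subseteq> I
       \<and> f = (\<lambda>x. \<Sum>U\<in>S. c U * indicator U x)
       \<and> F = (\<lambda>x. \<Sum>U\<in>S. c U * indicator (\<psi> U) x))"

text \<open>Carrier of the crossed product: finitely supported families (a_g) with a_g in Lc(R, I_g),
  standing for the sum of a_g delta_g.\<close>
definition cp_carrier :: "('g \<Rightarrow> 'x set set) \<Rightarrow> ('g \<Rightarrow> 'x \<Rightarrow> 'r::comm_ring_1) set" where
  "cp_carrier I = {a. finite {g. a g \<noteq> (\<lambda>_. 0)} \<and> (\<forall>g. a g \<in> Lc (I g))}"

text \<open>Product: (f delta_g)(f' delta_h) = phi_g(phi_{g^-1}(f) f') delta_{gh}.\<close>
definition cp_mult :: "('g::group_add \<Rightarrow> 'x set set) \<Rightarrow> ('g \<Rightarrow> 'x set \<Rightarrow> 'x set)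
    \<Rightarrow> ('g \<Rightarrow> 'x \<Rightarrow> 'r) \<Rightarrow> ('g \<Rightarrow> 'x \<Rightarrow> 'r) \<Rightarrow> ('g \<Rightarrow> 'x \<Rightarrow> 'r::comm_ring_1)" where
  "cp_mult I \<phi> a b = (\<lambda>k x. \<Sum>g\<in>{g. a g \<noteq> (\<lambda>_. 0)}.
       lc_map (I (- g)) (\<phi> g)
         (\<lambda>y. lc_map (I g) (\<phi> (- g)) (a g) y * b (- g + k) y) x)"

definition two_sided_ideal ::
  "('a \<Rightarrow> 'x \<Rightarrow> 'r::comm_ring_1) set \<Rightarrow> ('a \<Rightarrow> 'x \<Rightarrow> 'r) set
   \<Rightarrow> (('a \<Rightarrow> 'x \<Rightarrow> 'r) \<Rightarrow> ('a \<Rightarrow> 'x \<Rightarrow> 'r) \<Rightarrow> ('a \<Rightarrow> 'x \<Rightarrow> 'r)) \<Rightarrow> bool" where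
  "two_sided_ideal A C mult \<longleftrightarrow>
     A \<subseteq> C \<and> (\<lambda>_ _. 0) \<in> A
   \<and> (\<forall>a\<in>A. \<forall>b\<in>A. (\<lambda>k x. a k x + b k x) \<in> A)
   \<and> (\<forall>a\<in>A. \<forall>r. (\<lambda>k x. r * a k x) \<in> A)
   \<and> (\<forall>a\<in>A. \<forall>b\<in>C. mult a b \<in> A \<and> mult b a \<in> A)"

end

theory Submission
  imports Defs
begin

(* On generators, (1\<^sub>U \<delta>\<^sub>g)(1\<^sub>V \<delta>\<^sub>h) = 1\<^bsub>\<phi> g (\<phi> (-g) U \<inter> V)\<^esub> \<delta>\<^bsub>g+h\<^esub> (computed with \<phi>2, I2).
   If U \<in> I1 g or V \<in> I1 h, then W = \<phi>2 (-g) U \<inter> V lies in B1, because B1 is an ideal of B2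
   and \<phi>2 extends \<phi>1; so W \<in> I1 (-g), and \<phi>2 g W = \<phi>1 g W lies in B1 \<inter> I2 (g+h) = I1 (g+h).
   The real work is that the linear maps 1\<^sub>U \<mapsto> 1\<^bsub>\<psi> U\<^esub> are well defined. A lattice
   homomorphism \<psi> of rings of sets with \<psi> {} = {} sends the atom of a finite family N determined
   by a point (the members containing it minus the others) to the corresponding atom of \<psi> ` N;
   hence every point y of some \<psi> U, U \<in> N, has a point x with x \<in> U \<longleftrightarrow> y \<in> \<psi> U for all
   U \<in> N, and equal combinations of indicators are sent to equal ones. *)

definition lattice_hom_on :: "'x set set \<Rightarrow> ('x set \<Rightarrow> 'y set) \<Rightarrow> bool" where
  "lattice_hom_on I \<psi> \<longleftrightarrow> \<psi> {} = {} \<and>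
     (\<forall>U\<in>I. \<forall>V\<in>I. \<psi> (U \<union> V) = \<psi> U \<union> \<psi> V \<and> \<psi> (U \<inter> V) = \<psi> U \<inter> \<psi> V)"

lemma gba_Inter:
  assumes "gba I" "finite T" "T \<noteq> {}" "T \<subseteq> I"
  shows "\<Inter>T \<in> I"
  using assms(2-4) by (induction T rule: finite_ne_induct) (use assms(1) in \<open>auto simp: gba_def\<close>)

lemma gba_Union:
  assumes "gba I" "finite T" "T \<subseteq> I"
  shows "\<Union>T \<in> I"
  using assms(2,3) by (induction T rule: finite_induct) (use assms(1) in \<open>auto simp: gba_def\<close>)

lemma gba_ideal_imp_gba:
  assumes "gba B" "gba_ideal B J"
  shows "gba J"
  unfolding gba_def
proof (intro conjI ballI)
  show "{} \<in> J" using assms(2) by (simp add: gba_ideal_def)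
  fix U V assume U: "U \<in> J" and V: "V \<in> J"
  with assms show "U \<union> V \<in> J" "U \<inter> V \<in> J" by (auto simp: gba_ideal_def)
  have "U \<in> B" "V \<in> B" using assms(2) U V by (auto simp: gba_ideal_def)
  then have "U - V \<in> B" using assms(1) by (simp add: gba_def)
  then have "U \<inter> (U - V) \<in> J" using assms(2) U by (simp add: gba_ideal_def)
  then show "U - V \<in> J" by (simp add: Int_absorb1)
qed

lemma lattice_hom_on_Inter:
  assumes "gba I" "lattice_hom_on I \<psi>" "finite T" "T \<noteq> {}" "T \<subseteq> I"
  shows "\<psi> (\<Inter>T) = \<Inter>(\<psi> ` T)"
  using assms(3-5)
proof (induction T rule: finite_ne_induct)
  case (insert U T)
  then show ?case using assms(1,2) gba_Inter[OF assms(1)] by (auto simp: lattice_hom_on_def)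
qed simp

lemma lattice_hom_on_Union:
  assumes "gba I" "lattice_hom_on I \<psi>" "finite T" "T \<subseteq> I"
  shows "\<psi> (\<Union>T) = \<Union>(\<psi> ` T)"
  using assms(3,4)
proof (induction T rule: finite_induct)
  case (insert U T)
  then show ?case using assms(1,2) gba_Union[OF assms(1)] by (auto simp: lattice_hom_on_def)
qed (use assms(2) in \<open>simp add: lattice_hom_on_def\<close>)

lemma lattice_hom_on_Diff:
  assumes "gba I" "lattice_hom_on I \<psi>" "P \<in> I" "Q \<in> I"
  shows "\<psi> (P - Q) = \<psi> P - \<psi> Q"
proof -
  have in_I: "P - Q \<in> I" "P \<inter> Q \<in> I" using assms(1,3,4) by (auto simp: gba_def)
  have "\<psi> P = \<psi> ((P - Q) \<union> (P \<inter> Q))" by (simp add: Un_Diff_Int)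
  also have "\<dots> = \<psi> (P - Q) \<union> (\<psi> P \<inter> \<psi> Q)"
    using assms(2-4) in_I by (simp add: lattice_hom_on_def)
  finally have "\<psi> P = \<psi> (P - Q) \<union> (\<psi> P \<inter> \<psi> Q)" .
  moreover have "\<psi> (P - Q) \<inter> \<psi> Q = \<psi> ((P - Q) \<inter> Q)"
    using assms(2,4) in_I by (simp add: lattice_hom_on_def)
  then have "\<psi> (P - Q) \<inter> \<psi> Q = {}"
    using assms(2) by (simp add: lattice_hom_on_def Diff_disjoint Int_commute)
  ultimately show ?thesis by blast
qed

lemma lattice_hom_on_membership_pattern:
  assumes "gba I" "lattice_hom_on I \<psi>" "finite N" "N \<subseteq> I" "U\<^sub>0 \<in> N" "y \<in> \<psi> U\<^sub>0"
  shows "\<exists>x. \<forall>U\<in>N. x \<in> U \<longleftrightarrow> y \<in> \<psi> U"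
proof -
  define T where "T = {U\<in>N. y \<in> \<psi> U}"
  define R where "R = N - T"
  have T: "finite T" "T \<noteq> {}" "T \<subseteq> I" and R: "finite R" "R \<subseteq> I"
    using assms(3-6) unfolding T_def R_def by auto
  have "\<psi> (\<Inter>T - \<Union>R) = \<Inter>(\<psi> ` T) - \<Union>(\<psi> ` R)"
    using lattice_hom_on_Diff[OF assms(1,2) gba_Inter[OF assms(1) T] gba_Union[OF assms(1) R]]
      lattice_hom_on_Inter[OF assms(1,2) T] lattice_hom_on_Union[OF assms(1,2) R] by simp
  then have "y \<in> \<psi> (\<Inter>T - \<Union>R)" unfolding T_def R_def by blast
  moreover have "\<psi> {} = {}" using assms(2) by (simp add: lattice_hom_on_def)
  ultimately have "\<Inter>T - \<Union>R \<noteq> {}" by force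
  then obtain x where "x \<in> \<Inter>T" "x \<notin> \<Union>R" by blast
  then show ?thesis unfolding R_def T_def by blast
qed

lemma lattice_hom_on_indicator_sums_eq:
  fixes c d :: "'x set \<Rightarrow> 'r::comm_ring_1"
  assumes "gba I" "lattice_hom_on I \<psi>" "finite S" "S \<subseteq> I" "finite T" "T \<subseteq> I"
    and eq: "(\<lambda>x. \<Sum>U\<in>S. c U * indicator U x) = (\<lambda>x. \<Sum>U\<in>T. d U * indicator U x)"
  shows "(\<lambda>y. \<Sum>U\<in>S. c U * indicator (\<psi> U) y) = (\<lambda>y. \<Sum>U\<in>T. d U * indicator (\<psi> U) y)"
proof
  fix y
  show "(\<Sum>U\<in>S. c U * indicator (\<psi> U) y) = (\<Sum>U\<in>T. d U * indicator (\<psi> U) y)"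
  proof (cases "\<exists>U\<^sub>0\<in>S \<union> T. y \<in> \<psi> U\<^sub>0")
    case False
    then show ?thesis by (simp add: indicator_def)
  next
    case True
    then obtain x where x: "\<forall>U\<in>S \<union> T. x \<in> U \<longleftrightarrow> y \<in> \<psi> U"
      using lattice_hom_on_membership_pattern[OF assms(1,2), of "S \<union> T"] assms(3-6) by blast
    have "(\<Sum>U\<in>S. c U * indicator (\<psi> U) y) = (\<Sum>U\<in>S. c U * indicator U x)"
      using x by (intro sum.cong) (auto simp: indicator_def)
    also have "\<dots> = (\<Sum>U\<in>T. d U * indicator U x)" using fun_cong[OF eq] .
    also have "\<dots> = (\<Sum>U\<in>T. d U * indicator (\<psi> U) y)"
      using x by (intro sum.cong) (auto simp: indicator_def)
    finally show ?thesis .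
  qed
qed

lemma lc_map_indicator_sum:
  fixes c :: "'x set \<Rightarrow> 'r::comm_ring_1"
  assumes "gba I" "lattice_hom_on I \<psi>" "finite S" "S \<subseteq> I"
  shows "lc_map I \<psi> (\<lambda>x. \<Sum>U\<in>S. c U * indicator U x) = (\<lambda>y. \<Sum>U\<in>S. c U * indicator (\<psi> U) y)"
  unfolding lc_map_def
proof (rule the_equality)
  fix F
  assume "\<exists>S' c'. finite S' \<and> S' \<subseteq> I
    \<and> (\<lambda>x. \<Sum>U\<in>S. c U * indicator U x) = (\<lambda>x. \<Sum>U\<in>S'. c' U * indicator U x)
    \<and> F = (\<lambda>x. \<Sum>U\<in>S'. c' U * indicator (\<psi> U) x)"
  then obtain S' c' where S': "finite S'" "S' \<subseteq> I"
    and eq: "(\<lambda>x. \<Sum>U\<in>S. c U * indicator U x) = (\<lambda>x. \<Sum>U\<in>S'. c' U * indicator U x)"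
    and F: "F = (\<lambda>x. \<Sum>U\<in>S'. c' U * indicator (\<psi> U) x)"
    by blast
  show "F = (\<lambda>y. \<Sum>U\<in>S. c U * indicator (\<psi> U) y)"
    using lattice_hom_on_indicator_sums_eq[OF assms S' eq] F by simp
qed (use assms(3,4) in blast)

lemma LcI: "finite S \<Longrightarrow> S \<subseteq> I \<Longrightarrow> f = (\<lambda>x. \<Sum>U\<in>S. c U * indicator U x) \<Longrightarrow> f \<in> Lc I"
  unfolding Lc_def by blast

lemma LcE:
  assumes "f \<in> Lc I"
  obtains S c where "finite S" "S \<subseteq> I" "f = (\<lambda>x. \<Sum>U\<in>S. c U * indicator U x)"
  using assms unfolding Lc_def by blast

lemma Lc_zero: "(\<lambda>x. 0) \<in> Lc I"
  by (rule LcI[of "{}"]) simp_all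

lemma Lc_indicator: "W \<in> I \<Longrightarrow> (\<lambda>x. r * indicator W x) \<in> Lc I"
  by (rule LcI[of "{W}" _ _ "\<lambda>_. r"]) simp_all

lemma Lc_mono: "I \<subseteq> J \<Longrightarrow> Lc I \<subseteq> Lc J"
  unfolding Lc_def by blast

lemma Lc_add:
  assumes "f \<in> Lc I" "g \<in> Lc I"
  shows "(\<lambda>x. f x + g x) \<in> Lc I"
proof -
  obtain S c where S: "finite S" "S \<subseteq> I" "f = (\<lambda>x. \<Sum>U\<in>S. c U * indicator U x)"
    using assms(1) by (rule LcE)
  obtain T d where T: "finite T" "T \<subseteq> I" "g = (\<lambda>x. \<Sum>U\<in>T. d U * indicator U x)"
    using assms(2) by (rule LcE)
  define e where "e U = (if U \<in> S then c U else 0) + (if U \<in> T then d U else 0)" for U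
  have "f x + g x = (\<Sum>U\<in>S \<union> T. e U * indicator U x)" for x
  proof -
    have "(\<Sum>U\<in>S \<union> T. e U * indicator U x)
        = (\<Sum>U\<in>S \<union> T. if U \<in> S then c U * indicator U x else 0)
          + (\<Sum>U\<in>S \<union> T. if U \<in> T then d U * indicator U x else 0)"
      unfolding e_def sum.distrib[symmetric] by (rule sum.cong) (auto simp: distrib_right)
    also have "\<dots> = f x + g x"
      using S T by (simp add: sum.inter_restrict[symmetric] Un_Int_eq)
    finally show ?thesis by simp
  qed
  with S T show ?thesis by (intro LcI[of "S \<union> T" _ _ e]) auto
qed

lemma Lc_scale:
  assumes "f \<in> Lc I"
  shows "(\<lambda>x. r * f x) \<in> Lc I"
proof -
  obtain S c where S: "finite S" "S \<subseteq> I" "f = (\<lambda>x. \<Sum>U\<in>S. c U * indicator U x)"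
    using assms by (rule LcE)
  then show ?thesis
    by (intro LcI[of S _ _ "\<lambda>U. r * c U"]) (auto simp: sum_distrib_left mult.assoc)
qed

lemma Lc_sum:
  assumes "finite K" "\<And>k. k \<in> K \<Longrightarrow> f k \<in> Lc I"
  shows "(\<lambda>x. \<Sum>k\<in>K. f k x) \<in> Lc I"
  using assms by (induction K rule: finite_induct) (auto intro: Lc_zero Lc_add)

lemma Lc_mult:
  assumes "f \<in> Lc I" "g \<in> Lc J" "\<And>U V. U \<in> I \<Longrightarrow> V \<in> J \<Longrightarrow> U \<inter> V \<in> K"
  shows "(\<lambda>x. f x * g x) \<in> Lc K"
proof -
  obtain S c where S: "finite S" "S \<subseteq> I" "f = (\<lambda>x. \<Sum>U\<in>S. c U * indicator U x)"
    using assms(1) by (rule LcE)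
  obtain T d where T: "finite T" "T \<subseteq> J" "g = (\<lambda>x. \<Sum>V\<in>T. d V * indicator V x)"
    using assms(2) by (rule LcE)
  have "f x * g x = (\<Sum>(U, V)\<in>S \<times> T. (c U * d V) * indicator (U \<inter> V) x)" for x
    unfolding S(3) T(3) sum_product sum.cartesian_product
    by (rule sum.cong) (auto simp: indicator_inter_arith ac_simps)
  moreover have "(\<lambda>x. \<Sum>(U, V)\<in>S \<times> T. (c U * d V) * indicator (U \<inter> V) x) \<in> Lc K"
    using S T assms(3) by (intro Lc_sum) (auto intro!: Lc_indicator)
  ultimately show ?thesis by simp
qed

lemma lc_map_in_Lc:
  assumes "gba I" "lattice_hom_on I \<psi>" "f \<in> Lc J" "J \<subseteq> I" "\<psi> ` J \<subseteq> K"
  shows "lc_map I \<psi> f \<in> Lc K"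
proof -
  obtain S c where S: "finite S" "S \<subseteq> J" "f = (\<lambda>x. \<Sum>U\<in>S. c U * indicator U x)"
    using assms(3) by (rule LcE)
  then have "lc_map I \<psi> f = (\<lambda>y. \<Sum>U\<in>S. c U * indicator (\<psi> U) y)"
    using assms(4) by (auto intro!: lc_map_indicator_sum[OF assms(1,2)])
  also have "\<dots> \<in> Lc K"
    using S assms(5) by (intro Lc_sum Lc_indicator) auto
  finally show ?thesis .
qed

lemma lc_map_zero:
  assumes "gba I" "lattice_hom_on I \<psi>"
  shows "lc_map I \<psi> (\<lambda>x. 0) = (\<lambda>x. 0 :: 'r::comm_ring_1)"
  using lc_map_indicator_sum[OF assms, of "{}" "\<lambda>_. 0 :: 'r"] by simp

lemma partial_action_gba_ideal: "partial_action B I \<phi> \<Longrightarrow> gba_ideal B (I t)"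
  by (simp add: partial_action_def)

lemma partial_action_gba:
  assumes "partial_action B I \<phi>"
  shows "gba (I t)"
  by (rule gba_ideal_imp_gba[OF _ partial_action_gba_ideal[OF assms]])
    (use assms in \<open>simp add: partial_action_def\<close>)

lemma partial_action_lattice_hom: "partial_action B I \<phi> \<Longrightarrow> lattice_hom_on (I (- t)) (\<phi> t)"
  by (simp add: partial_action_def lattice_hom_on_def)

lemma partial_action_image: "partial_action B I \<phi> \<Longrightarrow> \<phi> t ` I (- t) = I t"
  by (simp add: partial_action_def bij_betw_def)

lemma partial_action_image_Int:
  "partial_action B I \<phi> \<Longrightarrow> \<phi> s ` (I (- s) \<inter> I t) = I s \<inter> I (s + t)"
  by (simp add: partial_action_def)

text \<open>The coefficient \<open>\<phi> g (\<phi> (-g) f \<cdot> f')\<close> of \<open>\<delta>\<^bsub>g+h\<^esub>\<close> in \<open>(f \<delta>\<^sub>g)(f' \<delta>\<^sub>h)\<close>.\<close>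
definition twisted_product ::
  "('g::group_add \<Rightarrow> 'x set set) \<Rightarrow> ('g \<Rightarrow> 'x set \<Rightarrow> 'x set) \<Rightarrow> 'g
   \<Rightarrow> ('x \<Rightarrow> 'r) \<Rightarrow> ('x \<Rightarrow> 'r) \<Rightarrow> 'x \<Rightarrow> 'r::comm_ring_1" where
  "twisted_product I \<phi> g f f' = lc_map (I (- g)) (\<phi> g) (\<lambda>y. lc_map (I g) (\<phi> (- g)) f y * f' y)"

lemma cp_mult_eq_sum_twisted_product:
  "cp_mult I \<phi> a b k = (\<lambda>x. \<Sum>g\<in>{g. a g \<noteq> (\<lambda>_. 0)}. twisted_product I \<phi> g (a g) (b (- g + k)) x)"
  by (simp add: cp_mult_def twisted_product_def)

lemma twisted_product_zero_right:
  assumes "partial_action B I \<phi>"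
  shows "twisted_product I \<phi> g f (\<lambda>_. 0) = (\<lambda>_. 0)"
  using lc_map_zero[OF partial_action_gba[OF assms] partial_action_lattice_hom[OF assms]]
  by (simp add: twisted_product_def)

lemma twisted_product_in_Lc:
  assumes act: "partial_action B I \<phi>"
    and f: "f \<in> Lc F" "F \<subseteq> I g" and f': "f' \<in> Lc F'" "F' \<subseteq> B"
    and K: "\<And>U V. U \<in> F \<Longrightarrow> V \<in> F' \<Longrightarrow> \<phi> g (\<phi> (- g) U \<inter> V) \<in> K"
  shows "twisted_product I \<phi> g f f' \<in> Lc K"
proof -
  define J where "J = {\<phi> (- g) U \<inter> V | U V. U \<in> F \<and> V \<in> F'}"
  have "lc_map (I g) (\<phi> (- g)) f \<in> Lc (\<phi> (- g) ` F)"
    using partial_action_lattice_hom[OF act, of "- g"]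
    by (intro lc_map_in_Lc[OF partial_action_gba[OF act] _ f]) simp_all
  then have "(\<lambda>y. lc_map (I g) (\<phi> (- g)) f y * f' y) \<in> Lc J"
    by (rule Lc_mult[OF _ f'(1)]) (auto simp: J_def)
  moreover have "J \<subseteq> I (- g)"
  proof
    fix W assume "W \<in> J"
    then obtain U V where W: "W = \<phi> (- g) U \<inter> V" and "U \<in> F" "V \<in> F'"
      by (auto simp: J_def)
    then have "\<phi> (- g) U \<in> I (- g)" "V \<in> B"
      using partial_action_image[OF act, of "- g"] f(2) f'(2) by auto
    then show "W \<in> I (- g)"
      unfolding W using partial_action_gba_ideal[OF act, of "- g"] by (simp add: gba_ideal_def)
  qed
  moreover have "\<phi> g ` J \<subseteq> K" using K by (auto simp: J_def)
  ultimately show ?thesis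
    unfolding twisted_product_def
    by (rule lc_map_in_Lc[OF partial_action_gba[OF act] partial_action_lattice_hom[OF act]])
qed

lemma cp_mult_support:
  assumes "partial_action B I \<phi>"
  shows "{k. cp_mult I \<phi> a b k \<noteq> (\<lambda>_. 0)}
    \<subseteq> (\<lambda>(g, h). g + h) ` ({g. a g \<noteq> (\<lambda>_. 0)} \<times> {h. b h \<noteq> (\<lambda>_. 0)})"
    (is "_ \<subseteq> ?sums")
proof
  fix k
  assume k: "k \<in> {k. cp_mult I \<phi> a b k \<noteq> (\<lambda>_. 0)}"
  show "k \<in> ?sums"
  proof (rule ccontr)
    assume k_notin: "k \<notin> ?sums"
    have "b (- g + k) = (\<lambda>_. 0)" if "a g \<noteq> (\<lambda>_. 0)" for g
    proof (rule ccontr)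
      assume "b (- g + k) \<noteq> (\<lambda>_. 0)"
      with that have "k \<in> ?sums"
        by (intro rev_image_eqI[of "(g, - g + k)"]) (simp_all add: add.assoc[symmetric])
      with k_notin show False by contradiction
    qed
    then have "cp_mult I \<phi> a b k = (\<lambda>_. 0)"
      by (simp add: cp_mult_eq_sum_twisted_product twisted_product_zero_right[OF assms])
    with k show False by simp
  qed
qed

lemma cp_mult_in_cp_carrier:
  assumes act: "partial_action B I \<phi>"
    and fin: "finite {g. a g \<noteq> (\<lambda>_. 0)}" "finite {h. b h \<noteq> (\<lambda>_. 0)}"
    and twisted: "\<And>g h. twisted_product I \<phi> g (a g) (b h) \<in> Lc (J (g + h))"
  shows "cp_mult I \<phi> a b \<in> cp_carrier J"
  unfolding cp_carrier_def
proof (intro CollectI conjI allI)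
  show "finite {k. cp_mult I \<phi> a b k \<noteq> (\<lambda>_. 0)}"
    using fin by (intro finite_subset[OF cp_mult_support[OF act]]) simp
  have "twisted_product I \<phi> g (a g) (b (- g + k)) \<in> Lc (J k)" for g k
    using twisted[of g "- g + k"] by (simp add: add.assoc[symmetric])
  then show "cp_mult I \<phi> a b k \<in> Lc (J k)" for k
    unfolding cp_mult_eq_sum_twisted_product using fin(1) by (intro Lc_sum)
qed

lemma cp_carrier_mono: "(\<And>g. I g \<subseteq> J g) \<Longrightarrow> cp_carrier I \<subseteq> cp_carrier J"
  unfolding cp_carrier_def using Lc_mono by blast

lemma cp_carrier_zero: "(\<lambda>_ _. 0) \<in> cp_carrier I"
  by (simp add: cp_carrier_def Lc_zero)

lemma cp_carrier_add:
  assumes "a \<in> cp_carrier I" "b \<in> cp_carrier I"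
  shows "(\<lambda>k x. a k x + b k x) \<in> cp_carrier I"
proof -
  have "{k. (\<lambda>x. a k x + b k x) \<noteq> (\<lambda>_. 0)} \<subseteq> {k. a k \<noteq> (\<lambda>_. 0)} \<union> {k. b k \<noteq> (\<lambda>_. 0)}"
    by auto
  with assms show ?thesis
    unfolding cp_carrier_def by (auto intro: Lc_add finite_subset)
qed

lemma cp_carrier_scale:
  assumes "a \<in> cp_carrier I"
  shows "(\<lambda>k x. r * a k x) \<in> cp_carrier I"
proof -
  have "{k. (\<lambda>x. r * a k x) \<noteq> (\<lambda>_. 0)} \<subseteq> {k. a k \<noteq> (\<lambda>_. 0)}"
    by auto
  with assms show ?thesis
    unfolding cp_carrier_def by (auto intro: Lc_scale finite_subset)
qed

locale ideal_subaction =
  fixes B1 :: "'x set set" and I1 :: "'g::group_add \<Rightarrow> 'x set set" and \<phi>1 :: "'g \<Rightarrow> 'x set \<Rightarrow> 'x set"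
    and B2 :: "'x set set" and I2 :: "'g \<Rightarrow> 'x set set" and \<phi>2 :: "'g \<Rightarrow> 'x set \<Rightarrow> 'x set"
  assumes subaction: "partial_subaction B1 I1 \<phi>1 B2 I2 \<phi>2"
    and ideal: "gba_ideal B2 B1"
    and I1_eq: "\<And>g. I1 g = B1 \<inter> I2 g"
begin

lemma action1: "partial_action B1 I1 \<phi>1"
  and action2: "partial_action B2 I2 \<phi>2"
  and I1_subset_I2: "I1 g \<subseteq> I2 g"
  and phi1_eq_phi2: "U \<in> I1 (- g) \<Longrightarrow> \<phi>1 g U = \<phi>2 g U"
  using subaction by (auto simp: partial_subaction_def)

lemma I2_subset_B2: "I2 g \<subseteq> B2"
  using partial_action_gba_ideal[OF action2] by (simp add: gba_ideal_def)

lemma phi2_image_Int_in_I1: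
  assumes P: "P \<in> I2 (- g)" and V: "V \<in> I2 h" and B1: "P \<in> B1 \<or> V \<in> B1"
  shows "\<phi>2 g (P \<inter> V) \<in> I1 (g + h)"
proof -
  have "P \<in> B2" "V \<in> B2" using P V I2_subset_B2 by blast+
  then have "P \<inter> V \<in> B1"
    using B1 ideal by (auto simp: gba_ideal_def Int_commute)
  moreover have "P \<inter> V \<in> I2 (- g)" "V \<inter> P \<in> I2 h"
    using P V \<open>P \<in> B2\<close> \<open>V \<in> B2\<close> partial_action_gba_ideal[OF action2] by (simp_all add: gba_ideal_def)
  ultimately have W: "P \<inter> V \<in> I1 (- g)" "P \<inter> V \<in> I2 (- g) \<inter> I2 h"
    by (auto simp: I1_eq Int_commute)
  have "\<phi>2 g (P \<inter> V) \<in> B1"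
    using partial_action_image[OF action1, of g] phi1_eq_phi2[OF W(1)] W(1) I1_eq by blast
  moreover have "\<phi>2 g (P \<inter> V) \<in> I2 (g + h)"
    using partial_action_image_Int[OF action2, of g h] W(2) by blast
  ultimately show ?thesis by (simp add: I1_eq)
qed

lemma twisted_product_left_in_Lc:
  assumes "f \<in> Lc (I1 g)" "f' \<in> Lc (I2 h)"
  shows "twisted_product I2 \<phi>2 g f f' \<in> Lc (I1 (g + h))"
proof (rule twisted_product_in_Lc[OF action2 assms(1) I1_subset_I2 assms(2) I2_subset_B2])
  fix U V assume U: "U \<in> I1 g" and V: "V \<in> I2 h"
  have "\<phi>2 (- g) U \<in> I1 (- g)"
    using U partial_action_image[OF action1, of "- g"] phi1_eq_phi2[of U "- g"] by auto
  then show "\<phi>2 g (\<phi>2 (- g) U \<inter> V) \<in> I1 (g + h)"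
    using phi2_image_Int_in_I1 V I1_eq by blast
qed

lemma twisted_product_right_in_Lc:
  assumes "f \<in> Lc (I2 g)" "f' \<in> Lc (I1 h)"
  shows "twisted_product I2 \<phi>2 g f f' \<in> Lc (I1 (g + h))"
proof (rule twisted_product_in_Lc[OF action2 assms(1) order_refl assms(2)])
  show "I1 h \<subseteq> B2" using I1_subset_I2 I2_subset_B2 by blast
  fix U V assume U: "U \<in> I2 g" and V: "V \<in> I1 h"
  have "\<phi>2 (- g) U \<in> I2 (- g)"
    using U partial_action_image[OF action2, of "- g"] by auto
  then show "\<phi>2 g (\<phi>2 (- g) U \<inter> V) \<in> I1 (g + h)"
    using phi2_image_Int_in_I1 V I1_eq by blast
qed

lemma cp_mult_left_in_cp_carrier1:
  "a \<in> cp_carrier I1 \<Longrightarrow> b \<in> cp_carrier I2 \<Longrightarrow> cp_mult I2 \<phi>2 a b \<in> cp_carrier I1"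
  by (intro cp_mult_in_cp_carrier[OF action2] twisted_product_left_in_Lc) (simp_all add: cp_carrier_def)

lemma cp_mult_right_in_cp_carrier1:
  "a \<in> cp_carrier I2 \<Longrightarrow> b \<in> cp_carrier I1 \<Longrightarrow> cp_mult I2 \<phi>2 a b \<in> cp_carrier I1"
  by (intro cp_mult_in_cp_carrier[OF action2] twisted_product_right_in_Lc) (simp_all add: cp_carrier_def)

end

theorem lemma4p10:
  fixes B1 B2 :: "'x set set"
    and I1 I2 :: "'g::group_add \<Rightarrow> 'x set set"
    and \<phi>1 \<phi>2 :: "'g \<Rightarrow> 'x set \<Rightarrow> 'x set"
  assumes "partial_subaction B1 I1 \<phi>1 B2 I2 \<phi>2"
    and "gba_ideal B2 B1"
    and "\<And>g. I1 g = B1 \<inter> I2 g"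
  shows "two_sided_ideal (cp_carrier I1 :: ('g \<Rightarrow> 'x \<Rightarrow> 'r::comm_ring_1) set)
           (cp_carrier I2) (cp_mult I2 \<phi>2)"
proof -
  interpret ideal_subaction B1 I1 \<phi>1 B2 I2 \<phi>2
    using assms by unfold_locales
  show ?thesis
    unfolding two_sided_ideal_def
    by (intro conjI ballI allI cp_carrier_mono I1_subset_I2 cp_carrier_zero cp_carrier_add
        cp_carrier_scale cp_mult_left_in_cp_carrier1 cp_mult_right_in_cp_carrier1)
      (assumption+)
qed

end
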